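(* Let $k$ be an algebraically closed field of characteristic $2$, $g = x^2+y^2z+yz^2+xyz$, $m\ge 5$, $R_m = k[x_0,\dots,x_m,y_0,\dots,y_m,z_0,\dots,z_m]$, $(\mathbb{A}^3)_m=\mathrm{Spec}\,R_m$, and define $g^{(j)}\in R_m$ by $g(\sum_{i=0}^m x_it^i,\sum_{i=0}^m y_it^i,\sum_{i=0}^m z_it^i)=\sum_{j=0}^m g^{(j)}t^j$ in $R_m[t]/\langle t^{m+1}\rangle$. Define $I_m^0 = \langle x_0,x_1,x_2,y_0,y_1,z_0,z_1\rangle + \langle g^{(0)},\dots,g^{(m)}\rangle$, $I_m^1 = J_m^1 (R_m)_{z_1}\cap R_m$, $I_m^2 = J_m^2 (R_m)_{y_1}\cap R_m$, $I_m^3 = J_m^3 (R_m)_{y_1}\cap R_m$, where $J_m^1 = \langle x_0,x_1,y_0,y_1,z_0\rangle + \langle g^{(0)},\dots,g^{(m)}\rangle$, $J_m^2 = \langle x_0,x_1,y_0,z_0,z_1\rangle + \langle g^{(0)},\dots,g^{(m)}\rangle$, $J_m^3 = \langle x_0,x_1,y_0,z_0,y_1+z_1\rangle + \langle g^{(0)},\dots,g^{(m)}\rangle$, and let $Z_m^i=\mathbf{V}(I_m^i)$ for $i=0,1,2,3$. Let $\psi_1,\psi_2$ be the automorphisms of $(\mathbb{A}^3)_m$ corresponding to the $k$-algebra automorphisms $\varphi_1,\varphi_2$ of $R_m$ given by $\varphi_1: x_i\mapsto x_i,\ y_i\mapsto z_i,\ z_i\mapsto y_i$ and $\varphi_2: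 x_i\mapsto x_i,\ y_i\mapsto y_i,\ z_i\mapsto x_i+y_i+z_i$ (for all $i$). Then (1) $\psi_1(Z_m^0)=Z_m^0$, $\psi_1(Z_m^1)=Z_m^2$, $\psi_1(Z_m^2)=Z_m^1$, $\psi_1(Z_m^3)=Z_m^3$; (2) $\psi_2(Z_m^0)=Z_m^0$, $\psi_2(Z_m^1)=Z_m^1$, $\psi_2(Z_m^2)=Z_m^3$, $\psi_2(Z_m^3)=Z_m^2$.
   Context: $(R_m)_h$ is the localization at powers of $h$, $J(R_m)_h\cap R_m$ the preimage in $R_m$ of the extended ideal, and $\mathbf{V}(\cdot)$ the zero set in $(\mathbb{A}^3)_m$. *)

theory Defs
  imports "HOL-Library.Poly_Mapping" "HOL-Computational_Algebra.Polynomial"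
begin

datatype var = X nat | Y nat | Z nat

fun idx :: "var \<Rightarrow> nat" where
  "idx (X i) = i" | "idx (Y i) = i" | "idx (Z i) = i"

type_synonym 'k mpoly = "(var \<Rightarrow>\<^sub>0 nat) \<Rightarrow>\<^sub>0 'k"

definition Var :: "var \<Rightarrow> 'k::comm_ring_1 mpoly" where
  "Var v = Poly_Mapping.single (Poly_Mapping.single v 1) 1"

definition Const :: "'k::comm_ring_1 \<Rightarrow> 'k mpoly" where
  "Const c = Poly_Mapping.single 0 c"

definition Rm :: "nat \<Rightarrow> 'k::comm_ring_1 mpoly set" where
  "Rm m = {p :: 'k mpoly. \<forall>mon \<in> Poly_Mapping.keys p. \<forall>v \<in> Poly_Mapping.keys mon. idx v \<le> m}"

inductive_set ideal_gen :: "nat \<Rightarrow> 'k::comm_ring_1 mpoly set \<Rightarrow> 'k mpoly set"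
  for m S where
  zero: "0 \<in> ideal_gen m S"
| gen: "s \<in> S \<Longrightarrow> s \<in> ideal_gen m S"
| add: "a \<in> ideal_gen m S \<Longrightarrow> b \<in> ideal_gen m S \<Longrightarrow> a + b \<in> ideal_gen m S"
| smul: "r \<in> Rm m \<Longrightarrow> a \<in> ideal_gen m S \<Longrightarrow> r * a \<in> ideal_gen m S"

text \<open>J (R_m)_h \<inter> R_m, the preimage in R_m of the extension of J to the
  localization at the powers of h.\<close>
definition sat :: "nat \<Rightarrow> 'k::comm_ring_1 mpoly set \<Rightarrow> 'k mpoly \<Rightarrow> 'k mpoly set" where
  "sat m J h = {f \<in> Rm m. \<exists>n. h ^ n * f \<in> J}"

definition arc :: "nat \<Rightarrow> (nat \<Rightarrow> var) \<Rightarrow> 'k::comm_ring_1 mpoly poly" where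
  "arc m c = (\<Sum>i\<le>m. monom (Var (c i)) i)"

definition gpoly :: "'k::comm_ring_1 mpoly poly \<Rightarrow> 'k mpoly poly \<Rightarrow> 'k mpoly poly \<Rightarrow> 'k mpoly poly" where
  "gpoly x y z = x^2 + y^2 * z + y * z^2 + x * y * z"

text \<open>g^(j): coefficient of t^j (j \<le> m) of g(x(t),y(t),z(t)) mod t^(m+1).\<close>
definition gj :: "nat \<Rightarrow> nat \<Rightarrow> 'k::comm_ring_1 mpoly" where
  "gj m j = coeff (gpoly (arc m X) (arc m Y) (arc m Z)) j"

definition gens_g :: "nat \<Rightarrow> 'k::comm_ring_1 mpoly set" where
  "gens_g m = {gj m j | j. j \<le> m}"

definition I0 :: "nat \<Rightarrow> 'k::comm_ring_1 mpoly set" where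
  "I0 m = ideal_gen m ({Var (X 0), Var (X 1), Var (X 2), Var (Y 0), Var (Y 1), Var (Z 0), Var (Z 1)} \<union> gens_g m)"

definition J1 :: "nat \<Rightarrow> 'k::comm_ring_1 mpoly set" where
  "J1 m = ideal_gen m ({Var (X 0), Var (X 1), Var (Y 0), Var (Y 1), Var (Z 0)} \<union> gens_g m)"

definition J2 :: "nat \<Rightarrow> 'k::comm_ring_1 mpoly set" where
  "J2 m = ideal_gen m ({Var (X 0), Var (X 1), Var (Y 0), Var (Z 0), Var (Z 1)} \<union> gens_g m)"

definition J3 :: "nat \<Rightarrow> 'k::comm_ring_1 mpoly set" where
  "J3 m = ideal_gen m ({Var (X 0), Var (X 1), Var (Y 0), Var (Z 0), Var (Y 1) + Var (Z 1)} \<union> gens_g m)"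

definition I1 :: "nat \<Rightarrow> 'k::comm_ring_1 mpoly set" where
  "I1 m = sat m (J1 m) (Var (Z 1))"

definition I2 :: "nat \<Rightarrow> 'k::comm_ring_1 mpoly set" where
  "I2 m = sat m (J2 m) (Var (Y 1))"

definition I3 :: "nat \<Rightarrow> 'k::comm_ring_1 mpoly set" where
  "I3 m = sat m (J3 m) (Var (Y 1))"

definition eval :: "(var \<Rightarrow> 'k::comm_ring_1) \<Rightarrow> 'k mpoly \<Rightarrow> 'k" where
  "eval a p = (\<Sum>mon \<in> Poly_Mapping.keys p. Poly_Mapping.lookup p mon * (\<Prod>v \<in> Poly_Mapping.keys mon. a v ^ Poly_Mapping.lookup mon v))"

definition subst :: "(var \<Rightarrow> 'k::comm_ring_1 mpoly) \<Rightarrow> 'k mpoly \<Rightarrow> 'k mpoly" where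
  "subst \<sigma> p = (\<Sum>mon \<in> Poly_Mapping.keys p. Const (Poly_Mapping.lookup p mon) * (\<Prod>v \<in> Poly_Mapping.keys mon. \<sigma> v ^ Poly_Mapping.lookup mon v))"

text \<open>k-points of (A^3)_m: values of the variables of index \<le> m (normalised to 0 elsewhere).\<close>
definition pts :: "nat \<Rightarrow> (var \<Rightarrow> 'k::comm_ring_1) set" where
  "pts m = {a. \<forall>v. m < idx v \<longrightarrow> a v = 0}"

definition Vz :: "nat \<Rightarrow> 'k::comm_ring_1 mpoly set \<Rightarrow> (var \<Rightarrow> 'k) set" where
  "Vz m I = {a \<in> pts m. \<forall>f \<in> I. eval a f = 0}"

text \<open>Morphism of (A^3)_m induced by a k-algebra endomorphism phi of R_m:
  the point a (i.e. the k-algebra map eval a) goes to eval a \<circ> phi.\<close>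
definition psi :: "nat \<Rightarrow> ('k::comm_ring_1 mpoly \<Rightarrow> 'k mpoly) \<Rightarrow> (var \<Rightarrow> 'k) \<Rightarrow> (var \<Rightarrow> 'k)" where
  "psi m \<phi> a = (\<lambda>v. if idx v \<le> m then eval a (\<phi> (Var v)) else 0)"

definition phi1 :: "'k::comm_ring_1 mpoly \<Rightarrow> 'k mpoly" where
  "phi1 = subst (\<lambda>v. case v of X i \<Rightarrow> Var (X i) | Y i \<Rightarrow> Var (Z i) | Z i \<Rightarrow> Var (Y i))"

definition phi2 :: "'k::comm_ring_1 mpoly \<Rightarrow> 'k mpoly" where
  "phi2 = subst (\<lambda>v. case v of X i \<Rightarrow> Var (X i) | Y i \<Rightarrow> Var (Y i)
                      | Z i \<Rightarrow> Var (X i) + Var (Y i) + Var (Z i))"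

end

theory Submission
  imports Defs
begin

text \<open>
  For a substitution phi of R_m, psi sends a point a to the point eval a \<circ> phi, so it maps
  zeros of I to zeros of every I' \<subseteq> R_m with phi(I') \<subseteq> I. As phi1 and phi2 are involutions
  (phi2 in characteristic 2), each equality of zero sets follows from two inclusions of ideals.
  Both substitutions fix every g^(j): phi1 because g is symmetric in y and z, phi2 because
  g(x, y, x + y + z) - g(x, y, z) is divisible by 2. They map the remaining generators of
  I^0, J^1, J^2, J^3 into the partner ideal, and phi(h) differs from the localising element
  h' of the partner by an element of that ideal; as (a + j)^n f \<in> J whenever a^n f \<in> J and
  j \<in> J, the saturations are carried along as well.
\<close>

lemma of_nat_poly_mapping_eq_0_iff:
  "of_nat n = (0 :: 'a::comm_monoid_add \<Rightarrow>\<^sub>0 'b::comm_semiring_1) \<longleftrightarrow> of_nat n = (0 :: 'b)"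
proof
  assume "of_nat n = (0 :: 'a \<Rightarrow>\<^sub>0 'b)"
  then have "Poly_Mapping.lookup (of_nat n :: 'a \<Rightarrow>\<^sub>0 'b) 0 = 0" by simp
  then show "of_nat n = (0 :: 'b)" by (simp add: lookup_of_nat)
next
  assume "of_nat n = (0 :: 'b)"
  then show "of_nat n = (0 :: 'a \<Rightarrow>\<^sub>0 'b)" by (metis single_of_nat single_zero)
qed

lemma semiring_char_poly_mapping [simp]:
  "CHAR('a::comm_monoid_add \<Rightarrow>\<^sub>0 'b::comm_semiring_1) = CHAR('b)"
  by (rule CHAR_eqI) (simp_all add: of_nat_poly_mapping_eq_0_iff of_nat_eq_0_iff_char_dvd)

lemma two_eq_0_CHAR_2: "CHAR('a::semiring_1) = 2 \<Longrightarrow> (2 :: 'a) = 0"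
  using of_nat_CHAR[where 'a = 'a] by simp

section \<open>Evaluation of polynomials as a ring homomorphism\<close>

locale comm_ring_hom =
  fixes h :: "'a::comm_ring_1 \<Rightarrow> 'b::comm_ring_1"
  assumes hom_add: "h (x + y) = h x + h y"
    and hom_mult: "h (x * y) = h x * h y"
    and hom_one: "h 1 = 1"
begin

lemma hom_zero [simp]: "h 0 = 0"
  using hom_add[of 0 0] by simp

lemma hom_sum: "h (sum f A) = (\<Sum>x\<in>A. h (f x))"
  by (induction A rule: infinite_finite_induct) (simp_all add: hom_add)

lemma hom_prod: "h (prod f A) = (\<Prod>x\<in>A. h (f x))"
  by (induction A rule: infinite_finite_induct) (simp_all add: hom_mult hom_one)

lemma hom_power: "h (x ^ n) = h x ^ n"
  by (induction n) (simp_all add: hom_mult hom_one)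

lemma map_poly_add: "map_poly h (p + q) = map_poly h p + map_poly h q"
  by (rule poly_eqI) (simp add: coeff_map_poly hom_add)

lemma map_poly_mult: "map_poly h (p * q) = map_poly h p * map_poly h q"
  by (rule poly_eqI) (simp add: coeff_map_poly coeff_mult hom_sum hom_mult)

lemma map_poly_sum: "map_poly h (sum f A) = (\<Sum>x\<in>A. map_poly h (f x))"
  by (induction A rule: infinite_finite_induct) (simp_all add: map_poly_add)

end

definition monom_eval :: "(var \<Rightarrow> 'b::comm_semiring_1) \<Rightarrow> (var \<Rightarrow>\<^sub>0 nat) \<Rightarrow> 'b" where
  "monom_eval a mon = (\<Prod>v \<in> Poly_Mapping.keys mon. a v ^ Poly_Mapping.lookup mon v)"

definition hom_eval ::
    "('k::comm_ring_1 \<Rightarrow> 'b::comm_ring_1) \<Rightarrow> (var \<Rightarrow> 'b) \<Rightarrow> 'k mpoly \<Rightarrow> 'b" where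
  "hom_eval h a p = (\<Sum>mon \<in> Poly_Mapping.keys p. h (Poly_Mapping.lookup p mon) * monom_eval a mon)"

lemma eval_eq_hom_eval: "eval = hom_eval id"
  by (simp add: fun_eq_iff eval_def hom_eval_def monom_eval_def)

lemma subst_eq_hom_eval: "subst = hom_eval Const"
  by (simp add: fun_eq_iff subst_def hom_eval_def monom_eval_def)

lemma monom_eval_superset:
  assumes "finite S" "Poly_Mapping.keys mon \<subseteq> S"
  shows "monom_eval a mon = (\<Prod>v \<in> S. a v ^ Poly_Mapping.lookup mon v)"
  unfolding monom_eval_def
  by (rule prod.mono_neutral_left) (use assms in \<open>auto simp: in_keys_iff\<close>)

lemma monom_eval_add: "monom_eval a (k + l) = monom_eval a k * monom_eval a l"
proof -
  let ?S = "Poly_Mapping.keys k \<union> Poly_Mapping.keys l"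
  have "monom_eval a (k + l) = (\<Prod>v \<in> ?S. a v ^ Poly_Mapping.lookup (k + l) v)"
    by (rule monom_eval_superset) (auto dest: keys_add[THEN subsetD])
  also have "\<dots> = (\<Prod>v \<in> ?S. a v ^ Poly_Mapping.lookup k v * a v ^ Poly_Mapping.lookup l v)"
    by (simp add: lookup_add power_add)
  also have "\<dots> = monom_eval a k * monom_eval a l"
    by (simp add: prod.distrib monom_eval_superset[of ?S])
  finally show ?thesis .
qed

lemma poly_mapping_sum_single:
  "p = (\<Sum>k\<in>Poly_Mapping.keys p. Poly_Mapping.single k (Poly_Mapping.lookup p k))"
  by (rule poly_mapping_eqI)
     (simp add: lookup_sum lookup_single when_def in_keys_iff sum.delta cong: sum.cong)

context comm_ring_hom
begin

lemma hom_eval_single: "hom_eval h a (Poly_Mapping.single k c) = h c * monom_eval a k"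
  by (simp add: hom_eval_def)

lemma hom_eval_add: "hom_eval h a (p + q) = hom_eval h a p + hom_eval h a q"
  unfolding hom_eval_def
  by (rule setsum_keys_plus_distrib) (simp_all add: hom_add distrib_right)

lemma hom_eval_0 [simp]: "hom_eval h a 0 = 0"
  by (simp add: hom_eval_def)

lemma hom_eval_sum: "hom_eval h a (sum f A) = (\<Sum>x\<in>A. hom_eval h a (f x))"
  by (induction A rule: infinite_finite_induct) (simp_all add: hom_eval_add)

lemma hom_eval_mult: "hom_eval h a (p * q) = hom_eval h a p * hom_eval h a q"
proof -
  let ?P = "\<lambda>k. Poly_Mapping.single k (Poly_Mapping.lookup p k)"
  let ?Q = "\<lambda>l. Poly_Mapping.single l (Poly_Mapping.lookup q l)"
  have "p * q = (\<Sum>k\<in>Poly_Mapping.keys p. \<Sum>l\<in>Poly_Mapping.keys q. ?P k * ?Q l)"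
    by (subst poly_mapping_sum_single[of p], subst poly_mapping_sum_single[of q]) (rule sum_product)
  then have "hom_eval h a (p * q) = (\<Sum>k\<in>Poly_Mapping.keys p. \<Sum>l\<in>Poly_Mapping.keys q.
      (h (Poly_Mapping.lookup p k) * monom_eval a k) * (h (Poly_Mapping.lookup q l) * monom_eval a l))"
    by (simp add: hom_eval_sum mult_single hom_eval_single hom_mult monom_eval_add mult_ac)
  also have "\<dots> = hom_eval h a p * hom_eval h a q"
    by (simp add: hom_eval_def sum_product)
  finally show ?thesis .
qed

lemma comm_ring_hom_hom_eval: "comm_ring_hom (hom_eval h a)"
proof
  show "hom_eval h a 1 = 1"
    using hom_eval_single[of a 0 1] by (simp add: hom_one monom_eval_def)
qed (simp_all add: hom_eval_add hom_eval_mult)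

end

lemma comm_ring_hom_eval: "comm_ring_hom (eval a)"
proof -
  have "comm_ring_hom id"
    by unfold_locales simp_all
  then show ?thesis
    unfolding eval_eq_hom_eval by (rule comm_ring_hom.comm_ring_hom_hom_eval)
qed

lemma comm_ring_hom_subst: "comm_ring_hom (subst \<sigma>)"
proof -
  have "comm_ring_hom Const"
    by unfold_locales (simp_all add: Const_def single_add mult_single)
  then show ?thesis
    unfolding subst_eq_hom_eval by (rule comm_ring_hom.comm_ring_hom_hom_eval)
qed

interpretation eval_hom: comm_ring_hom "eval a" for a
  by (rule comm_ring_hom_eval)

interpretation subst_hom: comm_ring_hom "subst \<sigma>" for \<sigma>
  by (rule comm_ring_hom_subst)

lemma eval_Var [simp]: "eval a (Var v) = a v"
  by (simp add: eval_def Var_def)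

lemma subst_Var [simp]: "subst \<sigma> (Var v) = \<sigma> v"
  by (simp add: subst_def Var_def Const_def)

lemma eval_Const [simp]: "eval a (Const c) = c"
  by (simp add: Const_def eval_def)

lemma eval_subst: "eval a (subst \<sigma> p) = eval (\<lambda>v. eval a (\<sigma> v)) p"
  by (simp add: subst_def eval_hom.hom_sum eval_hom.hom_mult eval_hom.hom_prod eval_hom.hom_power)
     (simp add: eval_def)

section \<open>The subring R_m, its ideals and saturations\<close>

lemma Rm_0 [simp]: "0 \<in> Rm m"
  by (simp add: Rm_def)

lemma Rm_add: "p \<in> Rm m \<Longrightarrow> q \<in> Rm m \<Longrightarrow> p + q \<in> Rm m"
  unfolding Rm_def using keys_add[of p q] by blast

lemma Rm_mult: "p \<in> Rm m \<Longrightarrow> q \<in> Rm m \<Longrightarrow> p * q \<in> Rm m"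
  unfolding Rm_def by (fastforce dest!: keys_mult[THEN subsetD] keys_add[THEN subsetD])

lemma Rm_uminus: "p \<in> Rm m \<Longrightarrow> - p \<in> Rm m"
  by (simp add: Rm_def)

lemma Rm_diff: "p \<in> Rm m \<Longrightarrow> q \<in> Rm m \<Longrightarrow> p - q \<in> Rm m"
  using Rm_add[of p m "- q"] Rm_uminus[of q m] by simp

lemma Rm_single:
  "(\<And>v. v \<in> Poly_Mapping.keys mon \<Longrightarrow> idx v \<le> m) \<Longrightarrow> Poly_Mapping.single mon c \<in> Rm m"
  by (simp add: Rm_def)

lemma Rm_Const [simp]: "Const c \<in> Rm m"
  unfolding Const_def by (rule Rm_single) simp

lemma Rm_1 [simp]: "1 \<in> Rm m"
  using Rm_Const[of 1 m] by (simp add: Const_def)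

lemma Rm_Var: "idx v \<le> m \<Longrightarrow> Var v \<in> Rm m"
  unfolding Var_def by (rule Rm_single) simp

lemma Rm_sum: "(\<And>x. x \<in> A \<Longrightarrow> f x \<in> Rm m) \<Longrightarrow> sum f A \<in> Rm m"
  by (induction A rule: infinite_finite_induct) (simp_all add: Rm_add)

lemma Rm_prod: "(\<And>x. x \<in> A \<Longrightarrow> f x \<in> Rm m) \<Longrightarrow> prod f A \<in> Rm m"
  by (induction A rule: infinite_finite_induct) (simp_all add: Rm_mult)

lemma Rm_power: "p \<in> Rm m \<Longrightarrow> p ^ n \<in> Rm m"
  by (induction n) (simp_all add: Rm_mult)

lemma Rm_subst:
  assumes "\<And>v. idx v \<le> m \<Longrightarrow> \<sigma> v \<in> Rm m" and "p \<in> Rm m"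
  shows "subst \<sigma> p \<in> Rm m"
  unfolding subst_def
  using assms by (intro Rm_sum Rm_mult Rm_Const Rm_prod Rm_power) (auto simp: Rm_def)

lemma eval_cong_Rm:
  assumes "p \<in> Rm m" and "\<And>v. idx v \<le> m \<Longrightarrow> a v = b v"
  shows "eval a p = eval b p"
  unfolding eval_def using assms by (intro sum.cong prod.cong refl arg_cong2[where f = times]) (auto simp: Rm_def)

lemma eval_psi_subst: "p \<in> Rm m \<Longrightarrow> eval (psi m (subst \<sigma>) a) p = eval a (subst \<sigma> p)"
  unfolding eval_subst by (rule eval_cong_Rm) (auto simp: psi_def)

lemma ideal_gen_subset_Rm: "S \<subseteq> Rm m \<Longrightarrow> ideal_gen m S \<subseteq> Rm m"
proof
  show "f \<in> Rm m" if "S \<subseteq> Rm m" "f \<in> ideal_gen m S" for f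
    using that(2) by induction (use that(1) in \<open>auto simp: Rm_add Rm_mult\<close>)
qed

lemma ideal_gen_power_mult_shift:
  assumes "j \<in> ideal_gen m S" "a \<in> Rm m" "j \<in> Rm m" "x \<in> Rm m" "a ^ n * x \<in> ideal_gen m S"
  shows "(a + j) ^ n * x \<in> ideal_gen m S"
  using assms(4,5)
proof (induction n arbitrary: x)
  case 0
  then show ?case by simp
next
  case (Suc n)
  have "(a + j) ^ n * (a * x) \<in> ideal_gen m S"
    using Suc.IH[of "a * x"] Suc.prems assms(2) by (simp add: Rm_mult mult_ac)
  moreover have "(a + j) ^ n * x * j \<in> ideal_gen m S"
    using ideal_gen.smul[OF _ assms(1), of "(a + j) ^ n * x"] Suc.prems assms(2,3)
    by (simp add: Rm_mult Rm_power Rm_add mult.commute)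
  moreover have "(a + j) ^ Suc n * x = (a + j) ^ n * (a * x) + (a + j) ^ n * x * j"
    by (simp add: algebra_simps)
  ultimately show ?case by (simp add: ideal_gen.add)
qed

lemma subst_ideal_gen_subset:
  assumes "\<And>v. idx v \<le> m \<Longrightarrow> \<sigma> v \<in> Rm m" and "subst \<sigma> ` S \<subseteq> ideal_gen m S'"
  shows "subst \<sigma> ` ideal_gen m S \<subseteq> ideal_gen m S'"
proof clarify
  show "subst \<sigma> f \<in> ideal_gen m S'" if "f \<in> ideal_gen m S" for f
    using that
  proof induction
    case zero
    then show ?case by (simp add: ideal_gen.zero)
  next
    case (gen s)
    then show ?case using assms(2) by blast
  next
    case (add a b)
    then show ?case by (simp add: subst_hom.hom_add ideal_gen.add)
  next
    case (smul r a)
    then show ?case by (simp add: subst_hom.hom_mult ideal_gen.smul Rm_subst assms(1))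
  qed
qed

lemma subst_sat_subset:
  assumes \<sigma>: "\<And>v. idx v \<le> m \<Longrightarrow> \<sigma> v \<in> Rm m"
    and J: "subst \<sigma> ` J \<subseteq> ideal_gen m S'"
    and h: "h \<in> Rm m" "h' \<in> Rm m" "h' - subst \<sigma> h \<in> ideal_gen m S'"
  shows "subst \<sigma> ` sat m J h \<subseteq> sat m (ideal_gen m S') h'"
proof clarify
  fix f assume "f \<in> sat m J h"
  then obtain n where f: "f \<in> Rm m" and "h ^ n * f \<in> J"
    by (auto simp: sat_def)
  then have "subst \<sigma> h ^ n * subst \<sigma> f \<in> ideal_gen m S'"
    using J by (auto simp: subst_hom.hom_mult subst_hom.hom_power)
  then have "(subst \<sigma> h + (h' - subst \<sigma> h)) ^ n * subst \<sigma> f \<in> ideal_gen m S'"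
    using h f by (intro ideal_gen_power_mult_shift) (simp_all add: Rm_subst[OF \<sigma>] Rm_diff)
  then show "subst \<sigma> f \<in> sat m (ideal_gen m S') h'"
    using Rm_subst[OF \<sigma> f] by (auto simp: sat_def)
qed

section \<open>Zero sets under substitutions\<close>

lemma psi_subst_mem_Vz:
  assumes "a \<in> Vz m I" and "I' \<subseteq> Rm m" and "subst \<sigma> ` I' \<subseteq> I"
  shows "psi m (subst \<sigma>) a \<in> Vz m I'"
proof -
  have "eval (psi m (subst \<sigma>) a) f = 0" if "f \<in> I'" for f
    using assms that by (auto simp: Vz_def eval_psi_subst[of f m] subset_iff)
  then show ?thesis
    by (simp add: Vz_def pts_def psi_def)
qed

lemma psi_subst_image_Vz:
  fixes \<sigma> \<tau> :: "var \<Rightarrow> 'k::comm_ring_1 mpoly"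
  assumes \<sigma>: "\<And>v. idx v \<le> m \<Longrightarrow> \<sigma> v \<in> Rm m"
    and inverse: "\<And>v. idx v \<le> m \<Longrightarrow> subst \<tau> (\<sigma> v) = Var v"
    and "I \<subseteq> Rm m" "I' \<subseteq> Rm m"
    and "subst \<sigma> ` I' \<subseteq> I" "subst \<tau> ` I \<subseteq> I'"
  shows "psi m (subst \<sigma>) ` Vz m I = Vz m I'"
proof
  show "psi m (subst \<sigma>) ` Vz m I \<subseteq> Vz m I'"
    using psi_subst_mem_Vz assms(4,5) by blast
  show "Vz m I' \<subseteq> psi m (subst \<sigma>) ` Vz m I"
  proof
    fix b assume b: "b \<in> Vz m I'"
    have "psi m (subst \<sigma>) (psi m (subst \<tau>) b) = b"
    proof
      fix v
      show "psi m (subst \<sigma>) (psi m (subst \<tau>) b) v = b v"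
      proof (cases "idx v \<le> m")
        case True
        then show ?thesis
          using eval_psi_subst[OF \<sigma>[OF True], of \<tau> b] by (simp add: psi_def inverse)
      next
        case False
        then show ?thesis
          using b by (simp add: psi_def Vz_def pts_def)
      qed
    qed
    with psi_subst_mem_Vz[OF b assms(3,6)] show "b \<in> psi m (subst \<sigma>) ` Vz m I"
      by (metis image_eqI)
  qed
qed

section \<open>The arc equations and the two automorphisms\<close>

lemma coeff_add_Rm:
  "(\<And>n. coeff p n \<in> Rm m) \<Longrightarrow> (\<And>n. coeff q n \<in> Rm m) \<Longrightarrow> coeff (p + q) n \<in> Rm m"
  by (simp add: Rm_add)

lemma coeff_mult_Rm:
  "(\<And>n. coeff p n \<in> Rm m) \<Longrightarrow> (\<And>n. coeff q n \<in> Rm m) \<Longrightarrow> coeff (p * q) n \<in> Rm m"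
  by (simp add: coeff_mult Rm_sum Rm_mult)

lemma coeff_arc_Rm: "(\<And>i. idx (c i) = i) \<Longrightarrow> coeff (arc m c) n \<in> Rm m"
  unfolding arc_def coeff_sum by (rule Rm_sum) (auto intro: Rm_Var)

lemma gj_Rm: "gj m j \<in> Rm m"
  unfolding gj_def gpoly_def power2_eq_square
  by (intro coeff_add_Rm coeff_mult_Rm coeff_arc_Rm) simp_all

lemma gens_g_subset_Rm: "gens_g m \<subseteq> Rm m"
  by (auto simp: gens_g_def gj_Rm)

lemma map_poly_subst_arc: "map_poly (subst \<sigma>) (arc m c) = (\<Sum>i\<le>m. monom (\<sigma> (c i)) i)"
  by (simp add: arc_def subst_hom.map_poly_sum map_poly_monom)

lemma map_poly_subst_gpoly: "map_poly (subst \<sigma>) (gpoly x y z) =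
  gpoly (map_poly (subst \<sigma>) x) (map_poly (subst \<sigma>) y) (map_poly (subst \<sigma>) z)"
  by (simp add: gpoly_def subst_hom.map_poly_add subst_hom.map_poly_mult power2_eq_square)

lemma subst_gj: "subst \<sigma> (gj m j) =
    coeff (gpoly (map_poly (subst \<sigma>) (arc m X)) (map_poly (subst \<sigma>) (arc m Y))
      (map_poly (subst \<sigma>) (arc m Z))) j"
  by (simp add: gj_def coeff_map_poly[symmetric] map_poly_subst_gpoly)

lemma subst_ideal_gen_union_gens_g:
  assumes "\<And>v. idx v \<le> m \<Longrightarrow> \<sigma> v \<in> Rm m"
    and "\<And>j. j \<le> m \<Longrightarrow> subst \<sigma> (gj m j) = gj m j"
    and "subst \<sigma> ` A \<subseteq> ideal_gen m (B \<union> gens_g m)"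
  shows "subst \<sigma> ` ideal_gen m (A \<union> gens_g m) \<subseteq> ideal_gen m (B \<union> gens_g m)"
  using assms by (intro subst_ideal_gen_subset) (auto simp: gens_g_def intro: ideal_gen.gen)

lemma I_subset_Rm:
  assumes "2 \<le> m"
  shows "I0 m \<subseteq> Rm m" "I1 m \<subseteq> Rm m" "I2 m \<subseteq> Rm m" "I3 m \<subseteq> Rm m"
proof -
  have "I0 m \<subseteq> Rm m"
    unfolding I0_def using assms gens_g_subset_Rm
    by (intro ideal_gen_subset_Rm) (auto intro: Rm_Var)
  then show "I0 m \<subseteq> Rm m" "I1 m \<subseteq> Rm m" "I2 m \<subseteq> Rm m" "I3 m \<subseteq> Rm m"
    by (auto simp: I1_def I2_def I3_def sat_def)
qed

definition swap_yz :: "var \<Rightarrow> 'k::comm_ring_1 mpoly" where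
  "swap_yz v = (case v of X i \<Rightarrow> Var (X i) | Y i \<Rightarrow> Var (Z i) | Z i \<Rightarrow> Var (Y i))"

definition shear_z :: "var \<Rightarrow> 'k::comm_ring_1 mpoly" where
  "shear_z v = (case v of X i \<Rightarrow> Var (X i) | Y i \<Rightarrow> Var (Y i)
    | Z i \<Rightarrow> Var (X i) + Var (Y i) + Var (Z i))"

lemma swap_yz_simps [simp]:
  "swap_yz (X i) = Var (X i)" "swap_yz (Y i) = Var (Z i)" "swap_yz (Z i) = Var (Y i)"
  by (simp_all add: swap_yz_def)

lemma shear_z_simps [simp]:
  "shear_z (X i) = Var (X i)" "shear_z (Y i) = Var (Y i)" "shear_z (Z i) = Var (X i) + Var (Y i) + Var (Z i)"
  by (simp_all add: shear_z_def)

lemma phi1_eq_subst_swap_yz: "phi1 = subst swap_yz"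
  by (simp add: phi1_def swap_yz_def[abs_def])

lemma phi2_eq_subst_shear_z: "phi2 = subst shear_z"
  by (simp add: phi2_def shear_z_def[abs_def])

lemma swap_yz_Rm: "idx v \<le> m \<Longrightarrow> swap_yz v \<in> Rm m"
  by (cases v) (simp_all add: Rm_Var)

lemma shear_z_Rm: "idx v \<le> m \<Longrightarrow> shear_z v \<in> Rm m"
  by (cases v) (simp_all add: Rm_Var Rm_add)

lemma swap_yz_involution: "subst swap_yz (swap_yz v) = Var v"
  by (cases v) simp_all

lemma shear_z_involution:
  assumes "CHAR('k::comm_ring_1) = 2"
  shows "subst shear_z (shear_z v) = (Var v :: 'k mpoly)"
  using two_eq_0_CHAR_2[where 'a = "'k mpoly"] assms
  by (cases v) (simp_all add: subst_hom.hom_add algebra_simps)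

lemma gj_swap_yz: "subst swap_yz (gj m j) = gj m j"
proof -
  have "subst swap_yz (gj m j) = coeff (gpoly (arc m X) (arc m Z) (arc m Y)) j"
    unfolding subst_gj map_poly_subst_arc by (simp add: arc_def)
  also have "gpoly (arc m X) (arc m Z) (arc m Y) = gpoly (arc m X) (arc m Y) (arc m Z)"
    by (simp add: gpoly_def algebra_simps)
  finally show ?thesis
    by (simp add: gj_def)
qed

lemma gpoly_shear: "gpoly x y (x + y + z) = gpoly x y z + 2 * (x*x*y + 2*x*y*y + y*y*y + x*y*z + y*y*z)"
  unfolding gpoly_def power2_eq_square by (simp add: algebra_simps)

lemma gj_shear_z:
  assumes "CHAR('k::comm_ring_1) = 2"
  shows "subst shear_z (gj m j) = (gj m j :: 'k mpoly)"
proof -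
  have "subst shear_z (gj m j) = coeff (gpoly (arc m X) (arc m Y) (arc m X + arc m Y + arc m Z)) j"
    unfolding subst_gj map_poly_subst_arc by (simp add: arc_def sum.distrib add_monom[symmetric])
  also have "gpoly (arc m X) (arc m Y) (arc m X + arc m Y + arc m Z)
      = (gpoly (arc m X) (arc m Y) (arc m Z) :: 'k mpoly poly)"
    using two_eq_0_CHAR_2[where 'a = "'k mpoly poly"] assms by (simp add: gpoly_shear)
  finally show ?thesis
    by (simp add: gj_def)
qed

lemma swap_yz_maps_ideals:
  assumes "CHAR('k::comm_ring_1) = 2" and "1 \<le> m"
  shows "subst swap_yz ` I0 m \<subseteq> (I0 m :: 'k mpoly set)"
    and "subst swap_yz ` I1 m \<subseteq> (I2 m :: 'k mpoly set)"
    and "subst swap_yz ` I2 m \<subseteq> (I1 m :: 'k mpoly set)"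
    and "subst swap_yz ` I3 m \<subseteq> (I3 m :: 'k mpoly set)"
proof -
  note maps_J = subst_ideal_gen_union_gens_g[OF swap_yz_Rm gj_swap_yz]
  note maps_sat = subst_sat_subset[OF swap_yz_Rm maps_J]
  have Var_1: "idx v \<le> 1 \<Longrightarrow> Var v \<in> Rm m" for v
    using assms(2) by (simp add: Rm_Var)
  show "subst swap_yz ` I0 m \<subseteq> (I0 m :: 'k mpoly set)"
    unfolding I0_def by (rule maps_J) (auto intro: ideal_gen.gen)
  show "subst swap_yz ` I1 m \<subseteq> (I2 m :: 'k mpoly set)"
    and "subst swap_yz ` I2 m \<subseteq> (I1 m :: 'k mpoly set)"
    unfolding I1_def I2_def J1_def J2_def
    by (rule maps_sat; auto intro: ideal_gen.gen ideal_gen.zero Var_1)+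
  show "subst swap_yz ` I3 m \<subseteq> (I3 m :: 'k mpoly set)"
    unfolding I3_def J3_def
    by (rule maps_sat) (auto intro: ideal_gen.gen Var_1 simp: subst_hom.hom_add add.commute minus_CHAR_2 assms(1))
qed

lemma shear_z_maps_ideals:
  assumes "CHAR('k::comm_ring_1) = 2" and "1 \<le> m"
  shows "subst shear_z ` I0 m \<subseteq> (I0 m :: 'k mpoly set)"
    and "subst shear_z ` I1 m \<subseteq> (I1 m :: 'k mpoly set)"
    and "subst shear_z ` I2 m \<subseteq> (I3 m :: 'k mpoly set)"
    and "subst shear_z ` I3 m \<subseteq> (I2 m :: 'k mpoly set)"
proof -
  note maps_J = subst_ideal_gen_union_gens_g[OF shear_z_Rm gj_shear_z[OF assms(1)]]
  note maps_sat = subst_sat_subset[OF shear_z_Rm maps_J]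
  have Var_1: "idx v \<le> 1 \<Longrightarrow> Var v \<in> Rm m" for v
    using assms(2) by (simp add: Rm_Var)
  have two: "(2 :: 'k mpoly) = 0"
    using assms(1) by (simp add: two_eq_0_CHAR_2)
  show "subst shear_z ` I0 m \<subseteq> (I0 m :: 'k mpoly set)"
    unfolding I0_def by (rule maps_J) (auto intro!: ideal_gen.add intro: ideal_gen.gen)
  show "subst shear_z ` I1 m \<subseteq> (I1 m :: 'k mpoly set)"
    unfolding I1_def J1_def
    by (rule maps_sat)
      (auto simp: two minus_CHAR_2 uminus_CHAR_2 assms(1) intro!: ideal_gen.add intro: ideal_gen.gen Var_1)
  show "subst shear_z ` I2 m \<subseteq> (I3 m :: 'k mpoly set)"
    and "subst shear_z ` I3 m \<subseteq> (I2 m :: 'k mpoly set)"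
    unfolding I2_def I3_def J2_def J3_def
    by (rule maps_sat; auto simp: subst_hom.hom_add two add.assoc
          intro: ideal_gen.add ideal_gen.gen ideal_gen.zero Var_1)+
qed

theorem lemma4p11:
  fixes m :: nat
  assumes "CHAR('k::alg_closed_field) = 2"
    and "m \<ge> 5"
  shows "psi m phi1 ` Vz m (I0 m :: 'k mpoly set) = Vz m (I0 m)
       \<and> psi m phi1 ` Vz m (I1 m :: 'k mpoly set) = Vz m (I2 m)
       \<and> psi m phi1 ` Vz m (I2 m :: 'k mpoly set) = Vz m (I1 m)
       \<and> psi m phi1 ` Vz m (I3 m :: 'k mpoly set) = Vz m (I3 m)
       \<and> psi m phi2 ` Vz m (I0 m :: 'k mpoly set) = Vz m (I0 m)
       \<and> psi m phi2 ` Vz m (I1 m :: 'k mpoly set) = Vz m (I1 m)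
       \<and> psi m phi2 ` Vz m (I2 m :: 'k mpoly set) = Vz m (I3 m)
       \<and> psi m phi2 ` Vz m (I3 m :: 'k mpoly set) = Vz m (I2 m)"
proof -
  have "2 \<le> m" "1 \<le> m"
    using assms(2) by simp_all
  note I_Rm = I_subset_Rm[OF \<open>2 \<le> m\<close>]
  note swap = swap_yz_maps_ideals[OF assms(1) \<open>1 \<le> m\<close>]
  note shear = shear_z_maps_ideals[OF assms(1) \<open>1 \<le> m\<close>]
  show ?thesis
    unfolding phi1_eq_subst_swap_yz phi2_eq_subst_shear_z
    by (intro conjI psi_subst_image_Vz[OF swap_yz_Rm swap_yz_involution]
        psi_subst_image_Vz[OF shear_z_Rm shear_z_involution[OF assms(1)]] I_Rm swap shear)
qed

end
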